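(* Let $A,B$ be monoids, $p:A\to B$ and $j:B\to A$ monoid homomorphisms with $p\circ j=\mathrm{id}_B$, and suppose $(A,B,p,j)$ is a Schreier split epimorphism: for every $a\in A$ there is a unique $k\in \mathrm{Ker}(p)$ with $a=k\cdot j(p(a))$. Let $\kappa:\mathrm{Ker}(p)\to A$ be the inclusion and let $q:A\to\mathrm{Ker}(p)$ send $a$ to this unique $k$. Then $q$ satisfies, with respect to $\kappa$, the conditions (ZL1) $q(1_A)=1$; (ZL2) $q(\kappa(x)a)=x\,q(a)$ for all $x\in\mathrm{Ker}(p)$, $a\in A$; (ZL3) $q(aa')=q(a\cdot\kappa(q(a')))$ for all $a,a'\in A$; equivalently, $q$ defines a $\mathsf T^l_\kappa$-algebra structure on the left $\mathrm{Ker}(p)$-set $\mathrm{Ker}(p)$. Moreover $q\circ\kappa=\mathrm{id}_{\mathrm{Ker}(p)}$.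
   Context: $\mathrm{Ker}(p)=\{a\in A: p(a)=1_B\}$, a submonoid of $A$. For a monoid homomorphism $\iota:B'\to A$, $\mathsf T^l_\iota$ is the monad $X\mapsto A\otimes_{B'}X$ on left $B'$-sets induced by extension/restriction of scalars; its algebra structures on the left $B'$-set $B'$ correspond bijectively to maps $A\to B'$ satisfying (ZL1)–(ZL3) relative to $\iota$. *)

theory Defs
  imports "HOL-Algebra.Group"
begin

text \<open>Monoid homomorphism: multiplicative map between carriers preserving the unit.
  (HOL-Algebra's hom only requires multiplicativity.)\<close>
definition monoid_hom :: "('a, 'c) monoid_scheme \<Rightarrow> ('b, 'd) monoid_scheme \<Rightarrow> ('a \<Rightarrow> 'b) set" where
  "monoid_hom A B = {h. h \<in> hom A B \<and> h \<one>\<^bsub>A\<^esub> = \<one>\<^bsub>B\<^esub>}"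

definition mon_ker :: "('a, 'c) monoid_scheme \<Rightarrow> ('b, 'd) monoid_scheme \<Rightarrow> ('a \<Rightarrow> 'b) \<Rightarrow> 'a set" where
  "mon_ker A B p = {a \<in> carrier A. p a = \<one>\<^bsub>B\<^esub>}"

definition schreier_split_epi ::
  "('a, 'c) monoid_scheme \<Rightarrow> ('b, 'd) monoid_scheme \<Rightarrow> ('a \<Rightarrow> 'b) \<Rightarrow> ('b \<Rightarrow> 'a) \<Rightarrow> bool" where
  "schreier_split_epi A B p j \<longleftrightarrow>
     monoid A \<and> monoid B \<and> p \<in> monoid_hom A B \<and> j \<in> monoid_hom B A \<and>
     (\<forall>b\<in>carrier B. p (j b) = b) \<and>
     (\<forall>a\<in>carrier A. \<exists>!k. k \<in> mon_ker A B p \<and> a = k \<otimes>\<^bsub>A\<^esub> j (p a))"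

definition schreier_q ::
  "('a, 'c) monoid_scheme \<Rightarrow> ('b, 'd) monoid_scheme \<Rightarrow> ('a \<Rightarrow> 'b) \<Rightarrow> ('b \<Rightarrow> 'a) \<Rightarrow> 'a \<Rightarrow> 'a" where
  "schreier_q A B p j a = (THE k. k \<in> mon_ker A B p \<and> a = k \<otimes>\<^bsub>A\<^esub> j (p a))"

end

theory Submission
  imports Defs
begin

text \<open>Every element of \<open>A\<close> factors uniquely as \<open>q a \<otimes> j (p a)\<close> with \<open>q a\<close> in the kernel.
  Each of (ZL1)--(ZL3) is obtained by exhibiting such a factorisation of the left-hand argument
  whose kernel part is the right-hand side, and invoking uniqueness; in (ZL3) the point is that
  \<open>a \<otimes> a' = a \<otimes> q a' \<otimes> j (p a')\<close> and \<open>p\<close> ignores the kernel factor \<open>q a'\<close>.\<close>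

lemma monoid_hom_mult:
  "h \<in> monoid_hom A B \<Longrightarrow> x \<in> carrier A \<Longrightarrow> y \<in> carrier A \<Longrightarrow>
    h (x \<otimes>\<^bsub>A\<^esub> y) = h x \<otimes>\<^bsub>B\<^esub> h y"
  by (simp add: monoid_hom_def hom_mult)

lemma monoid_hom_closed: "h \<in> monoid_hom A B \<Longrightarrow> x \<in> carrier A \<Longrightarrow> h x \<in> carrier B"
  unfolding monoid_hom_def by (blast intro: hom_in_carrier)

lemma monoid_hom_one: "h \<in> monoid_hom A B \<Longrightarrow> h \<one>\<^bsub>A\<^esub> = \<one>\<^bsub>B\<^esub>"
  by (simp add: monoid_hom_def)

lemma mon_ker_mult_left:
  assumes "monoid B" "p \<in> monoid_hom A B" "k \<in> mon_ker A B p" "a \<in> carrier A"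
  shows "p (k \<otimes>\<^bsub>A\<^esub> a) = p a"
  using assms by (simp add: mon_ker_def monoid_hom_mult monoid_hom_closed monoid.l_one)

lemma mon_ker_mult_closed:
  assumes "monoid A" "monoid B" "p \<in> monoid_hom A B" "k \<in> mon_ker A B p" "l \<in> mon_ker A B p"
  shows "k \<otimes>\<^bsub>A\<^esub> l \<in> mon_ker A B p"
  using assms mon_ker_mult_left[OF assms(2,3,4)]
  by (simp add: mon_ker_def monoid.m_closed)

locale schreier_split =
  fixes A :: "('a, 'c) monoid_scheme" and B :: "('b, 'd) monoid_scheme"
    and p :: "'a \<Rightarrow> 'b" and j :: "'b \<Rightarrow> 'a"
  assumes schreier: "schreier_split_epi A B p j"
begin

abbreviation q :: "'a \<Rightarrow> 'a" where "q \<equiv> schreier_q A B p j"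

abbreviation K :: "'a set" where "K \<equiv> mon_ker A B p"

sublocale A: monoid A
  using schreier by (simp add: schreier_split_epi_def)

lemma monoid_B: "monoid B"
  using schreier by (simp add: schreier_split_epi_def)

lemma p_hom: "p \<in> monoid_hom A B" and j_hom: "j \<in> monoid_hom B A"
  using schreier by (simp_all add: schreier_split_epi_def)

lemma factor_unique: "a \<in> carrier A \<Longrightarrow> \<exists>!k. k \<in> K \<and> a = k \<otimes>\<^bsub>A\<^esub> j (p a)"
  using schreier by (simp add: schreier_split_epi_def)

lemma ker_carrier: "k \<in> K \<Longrightarrow> k \<in> carrier A"
  by (simp add: mon_ker_def)

lemma j_p_closed: "a \<in> carrier A \<Longrightarrow> j (p a) \<in> carrier A"
  by (simp add: monoid_hom_closed[OF j_hom] monoid_hom_closed[OF p_hom])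

lemma schreier_q_in_ker: "a \<in> carrier A \<Longrightarrow> q a \<in> K"
  and schreier_q_factor: "a \<in> carrier A \<Longrightarrow> a = q a \<otimes>\<^bsub>A\<^esub> j (p a)"
  using theI'[OF factor_unique] by (simp_all add: schreier_q_def)

lemma schreier_q_eqI:
  "a \<in> carrier A \<Longrightarrow> k \<in> K \<Longrightarrow> a = k \<otimes>\<^bsub>A\<^esub> j (p a) \<Longrightarrow> q a = k"
  unfolding schreier_q_def by (rule the1_equality[OF factor_unique]) simp_all

lemma schreier_q_one: "q \<one>\<^bsub>A\<^esub> = \<one>\<^bsub>A\<^esub>"
  by (rule schreier_q_eqI)
    (simp_all add: mon_ker_def monoid_hom_one[OF p_hom] monoid_hom_one[OF j_hom])

lemma schreier_q_mult_ker:
  assumes x: "x \<in> K" and a: "a \<in> carrier A"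
  shows "q (x \<otimes>\<^bsub>A\<^esub> a) = x \<otimes>\<^bsub>A\<^esub> q a"
proof (rule schreier_q_eqI)
  show "x \<otimes>\<^bsub>A\<^esub> q a \<in> K"
    using mon_ker_mult_closed[OF A.monoid_axioms monoid_B p_hom x schreier_q_in_ker[OF a]] .
  have "x \<otimes>\<^bsub>A\<^esub> a = x \<otimes>\<^bsub>A\<^esub> (q a \<otimes>\<^bsub>A\<^esub> j (p a))"
    using schreier_q_factor[OF a] by simp
  also have "\<dots> = x \<otimes>\<^bsub>A\<^esub> q a \<otimes>\<^bsub>A\<^esub> j (p (x \<otimes>\<^bsub>A\<^esub> a))"
    using x a by (simp add: mon_ker_mult_left[OF monoid_B p_hom] A.m_assoc ker_carrier
        schreier_q_in_ker j_p_closed)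
  finally show "x \<otimes>\<^bsub>A\<^esub> a = x \<otimes>\<^bsub>A\<^esub> q a \<otimes>\<^bsub>A\<^esub> j (p (x \<otimes>\<^bsub>A\<^esub> a))" .
qed (use x a ker_carrier in simp)

lemma schreier_q_mult:
  assumes a: "a \<in> carrier A" and a': "a' \<in> carrier A"
  shows "q (a \<otimes>\<^bsub>A\<^esub> a') = q (a \<otimes>\<^bsub>A\<^esub> q a')"
proof -
  define c where "c = a \<otimes>\<^bsub>A\<^esub> q a'"
  have qa': "q a' \<in> carrier A" using ker_carrier schreier_q_in_ker a' by blast
  have c: "c \<in> carrier A" using a qa' by (simp add: c_def)
  have qc: "q c \<in> carrier A" using ker_carrier schreier_q_in_ker c by blast
  have p_c: "p c = p a"
    using a qa' schreier_q_in_ker[OF a'] monoid_hom_closed[OF p_hom a] monoid_B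
    by (simp add: c_def monoid_hom_mult[OF p_hom] mon_ker_def monoid.r_one)
  have "a \<otimes>\<^bsub>A\<^esub> a' = c \<otimes>\<^bsub>A\<^esub> j (p a')"
    using schreier_q_factor[OF a'] a a' qa' j_p_closed by (metis A.m_assoc c_def)
  also have "\<dots> = q c \<otimes>\<^bsub>A\<^esub> (j (p a) \<otimes>\<^bsub>A\<^esub> j (p a'))"
    using schreier_q_factor[OF c] qc a a' j_p_closed by (metis A.m_assoc p_c)
  also have "\<dots> = q c \<otimes>\<^bsub>A\<^esub> j (p (a \<otimes>\<^bsub>A\<^esub> a'))"
    using a a' by (simp add: monoid_hom_mult[OF p_hom] monoid_hom_mult[OF j_hom]
        monoid_hom_closed[OF p_hom])
  finally have "q (a \<otimes>\<^bsub>A\<^esub> a') = q c"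
    using a a' schreier_q_in_ker[OF c] by (intro schreier_q_eqI) simp_all
  then show ?thesis by (simp add: c_def)
qed

lemma schreier_q_ker: "x \<in> K \<Longrightarrow> q x = x"
  using schreier_q_mult_ker[of x "\<one>\<^bsub>A\<^esub>"] by (simp add: schreier_q_one ker_carrier)

end

theorem proposition3p8:
  fixes A :: "('a, 'c) monoid_scheme" and B :: "('b, 'd) monoid_scheme"
    and p :: "'a \<Rightarrow> 'b" and j :: "'b \<Rightarrow> 'a"
  assumes "schreier_split_epi A B p j"
  defines "K \<equiv> mon_ker A B p"
    and "\<kappa> \<equiv> (\<lambda>x::'a. x)"
    and "q \<equiv> schreier_q A B p j"
  shows "(\<forall>a\<in>carrier A. q a \<in> K)
    \<and> q \<one>\<^bsub>A\<^esub> = \<one>\<^bsub>A\<^esub>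
    \<and> (\<forall>x\<in>K. \<forall>a\<in>carrier A. q (\<kappa> x \<otimes>\<^bsub>A\<^esub> a) = x \<otimes>\<^bsub>A\<^esub> q a)
    \<and> (\<forall>a\<in>carrier A. \<forall>a'\<in>carrier A. q (a \<otimes>\<^bsub>A\<^esub> a') = q (a \<otimes>\<^bsub>A\<^esub> \<kappa> (q a')))
    \<and> (\<forall>x\<in>K. q (\<kappa> x) = x)"
proof -
  interpret schreier_split A B p j by unfold_locales fact
  show ?thesis
    unfolding K_def \<kappa>_def q_def
    using schreier_q_in_ker schreier_q_one schreier_q_mult_ker schreier_q_mult schreier_q_ker
    by blast
qed

end
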